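(* Let $r$ and $k$ be positive integers, and let $G$ be a graph with $\chi(G)\le r$. Let $P\subset V(G)$ and let $d\colon P\to[r+k]$ be a precoloring of $P$ in $G$. Let $H$ be the complete graph with $V(H)=[r+k]$, and let $\mathbf{E}^d=(E_0^d,E_1^d,E_2^d)$ be as defined in the context. (1) If $k\le r$ and $H$ has a good matching for $\mathbf{E}^d$ of order $\lfloor\frac12(r+k)\rfloor$, then $d$ can be extended to a $\lceil\frac{3r+k}{2}\rceil$-coloring of $G$. (2) If $k>r$ and $H$ has a good matching for $\mathbf{E}^d$ of order $r$, then $d$ can be extended to an $(r+k)$-coloring of $G$.
   Context: $\mathcal{D}_G(P,2)=\{\{x,y\}\subset P: x\ne y,\ d_G(x,y)\le 2\}$. $[m]=\{1,\dots,m\}$. A precoloring of $P$ in $G$ is a proper coloring of $G[P]$; an $m$-coloring is a proper coloring with at most $m$ colors; $d$ is extended by $f$ if $f(v)=d(v)$ for all $v\in P$. For each edge $e=ij$ of $H$, $\varphi(e)=|\{\{x,y\}\in\mathcal{D}_G(P,2):\{d(x),d(y)\}=\{i,j\}\}|$, and $E_0^d=\{e:\varphi(e)=0\}$, $E_1^d=\{e:\varphi(e)=1\}$, $E_2^d=\{e:\varphi(e)\ge2\}$, $\mathbf{E}^d=(E_0^d,E_1^d,E_2^d)$. For an ordered partition $\mathbf{E}=(E_0,E_1,E_2)$ of $E(H)$ (pairwise disjoint sets, possibly empty, with union $E(H)$), a matching $M$ of $H$ is a good matching for $\mathbf{E}$ if $M\cap E_2=\emptyset$ and $|M\cap E_1|\le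 1$. The order of a matching is its number of edges. *)

theory Defs
  imports Main
begin

definition graph :: "'a set \<Rightarrow> ('a \<Rightarrow> 'a \<Rightarrow> bool) \<Rightarrow> bool" where
  "graph V E \<longleftrightarrow> finite V \<and> (\<forall>x y. E x y \<longrightarrow> E y x) \<and> (\<forall>x. \<not> E x x)
     \<and> (\<forall>x y. E x y \<longrightarrow> x \<in> V \<and> y \<in> V)"

definition proper_on :: "('a \<Rightarrow> 'a \<Rightarrow> bool) \<Rightarrow> 'a set \<Rightarrow> ('a \<Rightarrow> nat) \<Rightarrow> bool" where
  "proper_on E S f \<longleftrightarrow> (\<forall>x\<in>S. \<forall>y\<in>S. E x y \<longrightarrow> f x \<noteq> f y)"

definition chromatic_le :: "'a set \<Rightarrow> ('a \<Rightarrow> 'a \<Rightarrow> bool) \<Rightarrow> nat \<Rightarrow> bool" where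
  "chromatic_le V E r \<longleftrightarrow> (\<exists>f. proper_on E V f \<and> f ` V \<subseteq> {1..r})"

definition precoloring :: "('a \<Rightarrow> 'a \<Rightarrow> bool) \<Rightarrow> 'a set \<Rightarrow> nat \<Rightarrow> ('a \<Rightarrow> nat) \<Rightarrow> bool" where
  "precoloring E P n d \<longleftrightarrow> proper_on E P d \<and> d ` P \<subseteq> {1..n}"

definition extends_to_coloring ::
  "'a set \<Rightarrow> ('a \<Rightarrow> 'a \<Rightarrow> bool) \<Rightarrow> 'a set \<Rightarrow> ('a \<Rightarrow> nat) \<Rightarrow> nat \<Rightarrow> bool" where
  "extends_to_coloring V E P d m \<longleftrightarrow>
     (\<exists>f. proper_on E V f \<and> card (f ` V) \<le> m \<and> (\<forall>v\<in>P. f v = d v))"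

definition dist_le2 :: "('a \<Rightarrow> 'a \<Rightarrow> bool) \<Rightarrow> 'a \<Rightarrow> 'a \<Rightarrow> bool" where
  "dist_le2 E x y \<longleftrightarrow> E x y \<or> (\<exists>z. E x z \<and> E z y)"

definition D2 :: "('a \<Rightarrow> 'a \<Rightarrow> bool) \<Rightarrow> 'a set \<Rightarrow> 'a set set" where
  "D2 E P = {{x, y} | x y. x \<in> P \<and> y \<in> P \<and> x \<noteq> y \<and> dist_le2 E x y}"

definition H_edges :: "nat \<Rightarrow> nat set set" where
  "H_edges n = {e. e \<subseteq> {1..n} \<and> card e = 2}"

definition phi :: "('a \<Rightarrow> 'a \<Rightarrow> bool) \<Rightarrow> 'a set \<Rightarrow> ('a \<Rightarrow> nat) \<Rightarrow> nat set \<Rightarrow> nat" where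
  "phi E P d e = card {p \<in> D2 E P. d ` p = e}"

definition Ed0 where "Ed0 E P d n = {e \<in> H_edges n. phi E P d e = 0}"
definition Ed1 where "Ed1 E P d n = {e \<in> H_edges n. phi E P d e = 1}"
definition Ed2 where "Ed2 E P d n = {e \<in> H_edges n. phi E P d e \<ge> 2}"

definition matching :: "nat \<Rightarrow> nat set set \<Rightarrow> bool" where
  "matching n M \<longleftrightarrow> M \<subseteq> H_edges n \<and> (\<forall>e\<in>M. \<forall>e'\<in>M. e \<noteq> e' \<longrightarrow> e \<inter> e' = {})"

definition good_matching :: "nat \<Rightarrow> nat set set \<Rightarrow> nat set set \<Rightarrow> nat set set \<Rightarrow> nat set set \<Rightarrow> bool" where
  "good_matching n E0 E1 E2 M \<longleftrightarrow> matching n M \<and> M \<inter> E2 = {} \<and> card (M \<inter> E1) \<le> 1"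

end

theory Submission
  imports Defs
begin

text \<open>Fix an \<open>r\<close>-colouring \<open>c\<close> of \<open>G\<close> and send the edges of the good matching \<open>M\<close>
  injectively to colour classes of \<open>c\<close>. An uncoloured vertex whose class receives the edge
  \<open>{a, b}\<close> is recoloured by \<open>a\<close> or \<open>b\<close>, whichever does not appear on its precoloured
  neighbours; the remaining \<open>r - |M|\<close> classes get fresh colours. A vertex seeing both \<open>a\<close>
  and \<open>b\<close> among its precoloured neighbours exhibits a pair at distance at most 2 with
  colours \<open>{a, b}\<close>, so this is impossible for edges of \<open>E\<^sub>0\<close>; for the at most one matching
  edge in \<open>E\<^sub>1\<close> the unique such pair \<open>{x, y}\<close> is avoided by giving it the class of \<open>x\<close>, which
  contains no neighbour of \<open>x\<close>. This uses \<open>n + r - |M|\<close> colours in total.\<close>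

lemma card_le_inj_pointed:
  assumes "finite A" "finite B" "card A \<le> card B" "a \<in> A" "b \<in> B"
  shows "\<exists>\<tau>. inj_on \<tau> A \<and> \<tau> ` A \<subseteq> B \<and> \<tau> a = b"
proof -
  obtain t where t: "t ` A \<subseteq> B" "inj_on t A"
    using card_le_inj[OF assms(1-3)] by blast
  define swap where "swap j = (if j = t a then b else if j = b then t a else j)" for j
  have "inj swap"
    by (auto simp: inj_on_def swap_def)
  then have "inj_on (swap \<circ> t) A"
    using t(2) by (simp add: comp_inj_on inj_on_subset)
  moreover have "(swap \<circ> t) ` A \<subseteq> B"
    using t(1) assms(4,5) by (auto simp: swap_def)
  moreover have "(swap \<circ> t) a = b"
    by (simp add: swap_def)
  ultimately show ?thesis by blast
qed

lemma finite_H_edges: "finite (H_edges n)"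
  by (rule finite_subset[of _ "Pow {1..n}"]) (auto simp: H_edges_def)

lemma matching_finite: "matching n M \<Longrightarrow> finite M"
  unfolding matching_def using finite_H_edges finite_subset by blast

lemma matching_edge_subset: "matching n M \<Longrightarrow> e \<in> M \<Longrightarrow> e \<subseteq> {1..n}"
  unfolding matching_def H_edges_def by blast

lemma good_matching_edge:
  assumes "good_matching n (Ed0 E P d n) (Ed1 E P d n) (Ed2 E P d n) M" "e \<in> M"
  shows "card e = 2" "phi E P d e \<le> 1"
proof -
  have "e \<in> H_edges n" "e \<notin> Ed2 E P d n"
    using assms unfolding good_matching_def matching_def by auto
  then show "card e = 2" "phi E P d e \<le> 1"
    unfolding H_edges_def Ed2_def by auto
qed

lemma D2_memI: "x \<in> P \<Longrightarrow> y \<in> P \<Longrightarrow> x \<noteq> y \<Longrightarrow> dist_le2 E x y \<Longrightarrow> {x, y} \<in> D2 E P"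
  unfolding D2_def by blast

lemma D2_subset_Pow: "D2 E P \<subseteq> Pow P"
  unfolding D2_def by blast

definition blocked :: "('a \<Rightarrow> 'a \<Rightarrow> bool) \<Rightarrow> 'a set \<Rightarrow> ('a \<Rightarrow> nat) \<Rightarrow> 'a \<Rightarrow> nat set \<Rightarrow> bool" where
  "blocked E P d v e \<longleftrightarrow> (\<forall>a\<in>e. \<exists>u\<in>P. E v u \<and> d u = a)"

lemma blocked_edge_witnesses:
  assumes G: "graph V E" and "finite P" and "card e = 2" and phi_le: "phi E P d e \<le> 1"
    and "blocked E P d v e"
  shows "phi E P d e = 1" and "\<forall>p\<in>D2 E P. d ` p = e \<longrightarrow> (\<forall>u\<in>p. E v u)"
proof -
  obtain a b where e: "e = {a, b}" "a \<noteq> b"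
    using \<open>card e = 2\<close> card_2_iff by metis
  then obtain u1 u2 where u: "u1 \<in> P" "u2 \<in> P" "E v u1" "E v u2" "d u1 = a" "d u2 = b"
    using \<open>blocked E P d v e\<close> unfolding blocked_def by blast
  define W where "W = {p \<in> D2 E P. d ` p = e}"
  have "E u1 v" using G u(3) unfolding graph_def by blast
  then have "dist_le2 E u1 u2"
    using u(4) unfolding dist_le2_def by blast
  moreover have "u1 \<noteq> u2"
    using u(5,6) e(2) by blast
  ultimately have "{u1, u2} \<in> D2 E P"
    using D2_memI[OF u(1,2)] by blast
  moreover have "d ` {u1, u2} = e"
    using u(5,6) e(1) by (simp only: image_insert image_empty)
  ultimately have witness: "{u1, u2} \<in> W"
    unfolding W_def by (intro CollectI conjI)
  have "W \<subseteq> Pow P"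
    using D2_subset_Pow unfolding W_def by blast
  then have "finite W"
    using \<open>finite P\<close> by (simp add: finite_subset)
  then have "card W \<noteq> 0"
    using witness card_0_eq by blast
  then show phi: "phi E P d e = 1"
    using phi_le unfolding phi_def W_def[symmetric] by linarith
  then obtain q where "W = {q}"
    unfolding phi_def W_def[symmetric] by (auto simp: card_1_singleton_iff)
  then have "W = {{u1, u2}}"
    using witness by blast
  then show "\<forall>p\<in>D2 E P. d ` p = e \<longrightarrow> (\<forall>u\<in>p. E v u)"
    using u unfolding W_def by auto
qed

lemma exists_unblocked_assignment:
  assumes G: "graph V E" and "P \<subseteq> V"
    and c: "proper_on E V c" "c ` V \<subseteq> {1..r}"
    and M: "good_matching n (Ed0 E P d n) (Ed1 E P d n) (Ed2 E P d n) M" and "card M \<le> r"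
  shows "\<exists>\<tau>. inj_on \<tau> M \<and> \<tau> ` M \<subseteq> {1..r} \<and> (\<forall>e\<in>M. \<forall>v\<in>V. c v = \<tau> e \<longrightarrow> \<not> blocked E P d v e)"
proof -
  have "finite P"
    using G \<open>P \<subseteq> V\<close> finite_subset unfolding graph_def by blast
  have "finite M"
    using M matching_finite unfolding good_matching_def by blast
  have blocked_in_Ed1: "e \<in> Ed1 E P d n"
    and blocked_adjacent: "\<forall>p\<in>D2 E P. d ` p = e \<longrightarrow> (\<forall>u\<in>p. E v u)"
    if "e \<in> M" "blocked E P d v e" for e v
  proof -
    have "e \<in> H_edges n"
      using M \<open>e \<in> M\<close> unfolding good_matching_def matching_def by blast
    then show "e \<in> Ed1 E P d n" "\<forall>p\<in>D2 E P. d ` p = e \<longrightarrow> (\<forall>u\<in>p. E v u)"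
      using blocked_edge_witnesses[OF G \<open>finite P\<close> good_matching_edge[OF M \<open>e \<in> M\<close>] that(2)]
      unfolding Ed1_def by auto
  qed
  show ?thesis
  proof (cases "M \<inter> Ed1 E P d n = {}")
    case True
    obtain \<tau> where "inj_on \<tau> M" "\<tau> ` M \<subseteq> {1..r}"
      using card_le_inj[OF \<open>finite M\<close>, of "{1..r}"] \<open>card M \<le> r\<close> by auto
    then show ?thesis
      using True blocked_in_Ed1 by blast
  next
    case False
    then obtain e1 where e1: "e1 \<in> M" "e1 \<in> Ed1 E P d n"
      by blast
    have only_e1: "e = e1" if "e \<in> M" "e \<in> Ed1 E P d n" for e
    proof -
      have "card (M \<inter> Ed1 E P d n) \<le> Suc 0"
        using M unfolding good_matching_def by simp
      then show ?thesis
        using that e1 \<open>finite M\<close> card_le_Suc0_iff_eq[of "M \<inter> Ed1 E P d n"] by blast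
    qed
    define W where "W = {p \<in> D2 E P. d ` p = e1}"
    have "card W = 1"
      using e1(2) unfolding Ed1_def phi_def W_def by blast
    then obtain p where "p \<in> W"
      by (auto simp: card_1_singleton_iff)
    then obtain x y where xy: "{x, y} \<in> D2 E P" "d ` {x, y} = e1" "x \<in> P"
      unfolding W_def D2_def by blast
    have "c x \<in> {1..r}"
      using c(2) xy(3) \<open>P \<subseteq> V\<close> by blast
    moreover have "card M \<le> card {1..r}"
      using \<open>card M \<le> r\<close> by simp
    ultimately obtain \<tau> where \<tau>: "inj_on \<tau> M" "\<tau> ` M \<subseteq> {1..r}" "\<tau> e1 = c x"
      using card_le_inj_pointed[OF \<open>finite M\<close> finite_atLeastAtMost _ e1(1)] by blast
    have "\<not> blocked E P d v e" if "e \<in> M" "v \<in> V" "c v = \<tau> e" for e v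
    proof
      assume "blocked E P d v e"
      then have "e = e1"
        using only_e1 blocked_in_Ed1 \<open>e \<in> M\<close> by blast
      then have "E v x"
        using blocked_adjacent[OF \<open>e \<in> M\<close> \<open>blocked E P d v e\<close>] xy(1,2) by blast
      moreover have "c v = c x"
        using \<tau>(3) \<open>c v = \<tau> e\<close> \<open>e = e1\<close> by simp
      ultimately show False
        using c(1) \<open>v \<in> V\<close> xy(3) \<open>P \<subseteq> V\<close> unfolding proper_on_def by blast
    qed
    then show ?thesis
      using \<tau> by blast
  qed
qed

locale matching_assignment =
  fixes V :: "'a set" and E :: "'a \<Rightarrow> 'a \<Rightarrow> bool" and P :: "'a set" and d :: "'a \<Rightarrow> nat"
    and n :: nat and c :: "'a \<Rightarrow> nat" and r :: nat and M :: "nat set set" and \<tau> :: "nat set \<Rightarrow> nat"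
  assumes graph: "graph V E"
    and precoloring: "precoloring E P n d"
    and c_proper: "proper_on E V c" and c_range: "c ` V \<subseteq> {1..r}"
    and matching: "matching n M"
    and \<tau>_inj: "inj_on \<tau> M" and \<tau>_range: "\<tau> ` M \<subseteq> {1..r}"
    and unblocked: "\<And>e v. e \<in> M \<Longrightarrow> v \<in> V \<Longrightarrow> c v = \<tau> e \<Longrightarrow> \<not> blocked E P d v e"
begin

definition slot :: "nat \<Rightarrow> nat set" where
  "slot i = (if i \<in> \<tau> ` M then inv_into M \<tau> i else {n + i})"

definition colouring :: "'a \<Rightarrow> nat" where
  "colouring v = (if v \<in> P then d v else SOME a. a \<in> slot (c v) \<and> (\<forall>u\<in>P. E v u \<longrightarrow> d u \<noteq> a))"

lemma precoloured_le: "u \<in> P \<Longrightarrow> d u \<le> n"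
  using precoloring unfolding precoloring_def by auto

lemma slot_matched: "i \<in> \<tau> ` M \<Longrightarrow> slot i \<in> M \<and> \<tau> (slot i) = i"
  unfolding slot_def by (simp add: inv_into_into f_inv_into_f)

lemma slot_disjoint:
  assumes "i \<noteq> j" "0 < i" "0 < j"
  shows "slot i \<inter> slot j = {}"
proof (cases "i \<in> \<tau> ` M"; cases "j \<in> \<tau> ` M")
  assume "i \<in> \<tau> ` M" "j \<in> \<tau> ` M"
  then have "slot i \<in> M" "slot j \<in> M" "slot i \<noteq> slot j"
    using slot_matched assms(1) by metis+
  then show ?thesis
    using matching unfolding matching_def by blast
next
  assume "i \<in> \<tau> ` M" "j \<notin> \<tau> ` M"
  then have "slot i \<subseteq> {1..n}" "slot j = {n + j}"
    using slot_matched matching_edge_subset[OF matching] by (auto simp: slot_def)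
  then show ?thesis
    using \<open>0 < j\<close> by auto
next
  assume "i \<notin> \<tau> ` M" "j \<in> \<tau> ` M"
  then have "slot j \<subseteq> {1..n}" "slot i = {n + i}"
    using slot_matched matching_edge_subset[OF matching] by (auto simp: slot_def)
  then show ?thesis
    using \<open>0 < i\<close> by auto
next
  assume "i \<notin> \<tau> ` M" "j \<notin> \<tau> ` M"
  then show ?thesis
    using \<open>i \<noteq> j\<close> by (simp add: slot_def)
qed

lemma slot_has_free_colour:
  assumes "v \<in> V"
  shows "\<exists>a. a \<in> slot (c v) \<and> (\<forall>u\<in>P. E v u \<longrightarrow> d u \<noteq> a)"
proof (cases "c v \<in> \<tau> ` M")
  case True
  then have "\<not> blocked E P d v (slot (c v))"
    using unblocked slot_matched assms by metis
  then show ?thesis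
    unfolding blocked_def by blast
next
  case False
  have "0 < c v"
    using c_range assms by force
  then show ?thesis
    using False by (auto simp: slot_def dest: precoloured_le)
qed

lemma colouring_outside:
  assumes "v \<in> V" "v \<notin> P"
  shows "colouring v \<in> slot (c v)" and "\<And>u. u \<in> P \<Longrightarrow> E v u \<Longrightarrow> d u \<noteq> colouring v"
  using someI_ex[OF slot_has_free_colour[OF assms(1)]] assms(2)
  unfolding colouring_def by auto

lemma colouring_precoloured: "v \<in> P \<Longrightarrow> colouring v = d v"
  by (simp add: colouring_def)

lemma colouring_proper: "proper_on E V colouring"
  unfolding proper_on_def
proof (intro ballI impI)
  fix v w
  assume v: "v \<in> V" and w: "w \<in> V" and "E v w"
  then have "E w v"
    using graph unfolding graph_def by blast
  consider "v \<in> P" "w \<in> P" | "v \<in> P" "w \<notin> P" | "v \<notin> P" "w \<in> P" | "v \<notin> P" "w \<notin> P"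
    by blast
  then show "colouring v \<noteq> colouring w"
  proof cases
    case 1
    then have "d v \<noteq> d w"
      using precoloring \<open>E v w\<close> unfolding precoloring_def proper_on_def by blast
    then show ?thesis
      using 1 by (simp add: colouring_precoloured)
  next
    case 2
    then have "d v \<noteq> colouring w"
      using colouring_outside(2)[OF w _ _ \<open>E w v\<close>] by blast
    then show ?thesis
      using 2 by (simp add: colouring_precoloured)
  next
    case 3
    then have "d w \<noteq> colouring v"
      using colouring_outside(2)[OF v _ _ \<open>E v w\<close>] by blast
    then show ?thesis
      using 3 by (simp add: colouring_precoloured)
  next
    case 4
    have "c v \<noteq> c w"
      using c_proper v w \<open>E v w\<close> unfolding proper_on_def by blast
    moreover have "0 < c v" "0 < c w"
      using c_range v w by force+
    ultimately have "slot (c v) \<inter> slot (c w) = {}"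
      by (rule slot_disjoint)
    moreover have "colouring v \<in> slot (c v)" "colouring w \<in> slot (c w)"
      using colouring_outside(1) v w 4 by blast+
    ultimately show ?thesis
      by (metis disjoint_iff)
  qed
qed

lemma colouring_image: "colouring ` V \<subseteq> {1..n} \<union> (\<lambda>i. n + i) ` ({1..r} - \<tau> ` M)"
proof
  fix a
  assume "a \<in> colouring ` V"
  then obtain v where v: "v \<in> V" "a = colouring v"
    by blast
  show "a \<in> {1..n} \<union> (\<lambda>i. n + i) ` ({1..r} - \<tau> ` M)"
  proof (cases "v \<in> P")
    case True
    then show ?thesis
      using precoloring v unfolding precoloring_def by (auto simp: colouring_precoloured)
  next
    case False
    then have "a \<in> slot (c v)"
      using colouring_outside(1) v by blast
    show ?thesis
    proof (cases "c v \<in> \<tau> ` M")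
      case True
      then have "slot (c v) \<subseteq> {1..n}"
        using slot_matched matching_edge_subset[OF matching] by blast
      then show ?thesis
        using \<open>a \<in> slot (c v)\<close> by blast
    next
      case False
      moreover have "c v \<in> {1..r}"
        using c_range v(1) by blast
      ultimately show ?thesis
        using \<open>a \<in> slot (c v)\<close> by (simp add: slot_def)
    qed
  qed
qed

lemma card_colouring_image: "card (colouring ` V) \<le> n + r - card M"
proof -
  have "finite M"
    using matching matching_finite by blast
  define fresh where "fresh = {1..r} - \<tau> ` M"
  have "card (colouring ` V) \<le> card ({1..n} \<union> (\<lambda>i. n + i) ` fresh)"
    using colouring_image unfolding fresh_def by (intro card_mono) auto
  also have "\<dots> \<le> card {1..n} + card ((\<lambda>i. n + i) ` fresh)"
    by (rule card_Un_le)
  also have "\<dots> \<le> n + card fresh"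
    using card_image_le[of fresh "\<lambda>i. n + i"] unfolding fresh_def by simp
  also have "card fresh = r - card M"
    unfolding fresh_def
    using card_Diff_subset[OF finite_imageI[OF \<open>finite M\<close>] \<tau>_range] card_image[OF \<tau>_inj] by simp
  finally have "card (colouring ` V) \<le> n + (r - card M)" .
  moreover have "card M \<le> r"
    using card_mono[OF finite_atLeastAtMost \<tau>_range] card_image[OF \<tau>_inj] by simp
  ultimately show ?thesis
    by linarith
qed

lemma extends_to_coloring: "extends_to_coloring V E P d (n + r - card M)"
proof -
  have "\<forall>v\<in>P. colouring v = d v"
    by (simp add: colouring_precoloured)
  then show ?thesis
    unfolding extends_to_coloring_def using colouring_proper card_colouring_image by blast
qed

end

lemma extends_to_coloring_of_good_matching:
  assumes G: "graph V E" and "chromatic_le V E r" and "P \<subseteq> V" and d: "precoloring E P n d"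
    and M: "good_matching n (Ed0 E P d n) (Ed1 E P d n) (Ed2 E P d n) M" and "card M \<le> r"
  shows "extends_to_coloring V E P d (n + r - card M)"
proof -
  obtain c where c: "proper_on E V c" "c ` V \<subseteq> {1..r}"
    using \<open>chromatic_le V E r\<close> unfolding chromatic_le_def by blast
  obtain \<tau> where "inj_on \<tau> M" "\<tau> ` M \<subseteq> {1..r}" "\<forall>e\<in>M. \<forall>v\<in>V. c v = \<tau> e \<longrightarrow> \<not> blocked E P d v e"
    using exists_unblocked_assignment[OF G \<open>P \<subseteq> V\<close> c M \<open>card M \<le> r\<close>] by blast
  moreover have "matching n M"
    using M unfolding good_matching_def by blast
  ultimately interpret matching_assignment V E P d n c r M \<tau>
    using G d c by unfold_locales blast+
  show ?thesis
    by (rule extends_to_coloring)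
qed

theorem lemma10:
  fixes V :: "'a set" and E :: "'a \<Rightarrow> 'a \<Rightarrow> bool" and P :: "'a set" and d :: "'a \<Rightarrow> nat"
    and r k :: nat
  assumes "0 < r" and "0 < k"
    and "graph V E" and "chromatic_le V E r"
    and "P \<subseteq> V" and "precoloring E P (r + k) d"
  shows "(k \<le> r \<and>
          (\<exists>M. good_matching (r + k) (Ed0 E P d (r + k)) (Ed1 E P d (r + k)) (Ed2 E P d (r + k)) M
               \<and> card M = (r + k) div 2)
          \<longrightarrow> extends_to_coloring V E P d ((3 * r + k + 1) div 2))
       \<and> (r < k \<and>
          (\<exists>M. good_matching (r + k) (Ed0 E P d (r + k)) (Ed1 E P d (r + k)) (Ed2 E P d (r + k)) M
               \<and> card M = r)
          \<longrightarrow> extends_to_coloring V E P d (r + k))"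
proof (intro conjI impI)
  assume "k \<le> r \<and> (\<exists>M. good_matching (r + k) (Ed0 E P d (r + k)) (Ed1 E P d (r + k))
                          (Ed2 E P d (r + k)) M \<and> card M = (r + k) div 2)"
  then obtain M where "k \<le> r" and M: "good_matching (r + k) (Ed0 E P d (r + k)) (Ed1 E P d (r + k))
      (Ed2 E P d (r + k)) M" and "card M = (r + k) div 2"
    by blast
  then have "card M \<le> r"
    by simp
  then have "extends_to_coloring V E P d (r + k + r - card M)"
    using extends_to_coloring_of_good_matching assms(3-6) M by blast
  moreover have "r + k + r - card M = (3 * r + k + 1) div 2"
    using \<open>card M = (r + k) div 2\<close> by simp
  ultimately show "extends_to_coloring V E P d ((3 * r + k + 1) div 2)"
    by simp
next
  assume "r < k \<and> (\<exists>M. good_matching (r + k) (Ed0 E P d (r + k)) (Ed1 E P d (r + k))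
                          (Ed2 E P d (r + k)) M \<and> card M = r)"
  then obtain M where M: "good_matching (r + k) (Ed0 E P d (r + k)) (Ed1 E P d (r + k))
      (Ed2 E P d (r + k)) M" and "card M = r"
    by blast
  then have "extends_to_coloring V E P d (r + k + r - card M)"
    using extends_to_coloring_of_good_matching[OF assms(3-6) M] by simp
  then show "extends_to_coloring V E P d (r + k)"
    using \<open>card M = r\<close> by simp
qed

end
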